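(* Let $\tau,\lambda$ be types of degree $d$. There exists an arrangement of $\tau$ into $\lambda$ if and only if $\lambda$ can be obtained from $\tau$ by a finite sequence of elementary forgets followed by a finite sequence of elementary merges. In particular $a(\tau,\lambda)>0$ if and only if $\tau\le\lambda$ in the partial order on types of degree $d$ generated by elementary merges and forgets.
   Context: A type of degree $d$ is a finite multiset of pairs $(b,m)$ of positive integers with $\sum bm=d$. For types $\tau=\{(b_1,m_1),\dots,(b_r,m_r)\}$ and $\lambda=\{(c_1,n_1),\dots,(c_s,n_s)\}$ (fixed orderings), an arrangement of $\tau$ into $\lambda$ is an $r\times s$ non-negative integer matrix $A$ with $A\vec n=\vec m$ and $A^T\vec b=\vec c$; $a(\tau,\lambda)$ is their number. Elementary merge: if two pairs $(d_1,m),(d_2,m)$ of $\tau$ have the same second entry, replace them by the single pair $(d_1+d_2,m)$. Elementary forget: replace a pair $(d_1,m_1)$ of $\tau$ by the two pairs $(d_1,m_1-a),(d_1,a)$ for some integer $0<a<m_1$. The partial order $\le$ on types of degree $d$ is: $\tau\le\lambda$ iff $\lambda$ is obtained from $\tau$ by a finite sequence of elementary merges and forgets. *)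

theory Defs
  imports Main "HOL-Library.Multiset" "HOL-Library.Product_Lexorder"
begin

definition is_type :: "nat \<Rightarrow> (nat \<times> nat) multiset \<Rightarrow> bool" where
  "is_type d tau \<longleftrightarrow> (\<forall>p \<in># tau. fst p > 0 \<and> snd p > 0)
      \<and> sum_mset (image_mset (\<lambda>(b, m). b * m) tau) = d"

text \<open>Arrangements of an ordered type ts = [(b_1,m_1),...,(b_r,m_r)] into
  ls = [(c_1,n_1),...,(c_s,n_s)]: r x s nonnegative integer matrices A (entries
  outside the r x s range are zero) with A n = m and A^T b = c.\<close>
definition arrangements_list ::
  "(nat \<times> nat) list \<Rightarrow> (nat \<times> nat) list \<Rightarrow> (nat \<Rightarrow> nat \<Rightarrow> nat) set" where
  "arrangements_list ts ls = {A.
      (\<forall>i j. (length ts \<le> i \<or> length ls \<le> j) \<longrightarrow> A i j = 0)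
    \<and> (\<forall>i < length ts. (\<Sum>j < length ls. A i j * snd (ls ! j)) = snd (ts ! i))
    \<and> (\<forall>j < length ls. (\<Sum>i < length ts. A i j * fst (ts ! i)) = fst (ls ! j))}"

definition arrangements ::
  "(nat \<times> nat) multiset \<Rightarrow> (nat \<times> nat) multiset \<Rightarrow> (nat \<Rightarrow> nat \<Rightarrow> nat) set" where
  "arrangements tau lam =
     arrangements_list (sorted_list_of_multiset tau) (sorted_list_of_multiset lam)"

definition arr_count :: "(nat \<times> nat) multiset \<Rightarrow> (nat \<times> nat) multiset \<Rightarrow> nat" where
  "arr_count tau lam = card (arrangements tau lam)"

definition elem_merge :: "(nat \<times> nat) multiset \<Rightarrow> (nat \<times> nat) multiset \<Rightarrow> bool" where
  "elem_merge tau tau' \<longleftrightarrow> (\<exists>d1 d2 m rho.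
      tau = rho + {#(d1, m), (d2, m)#} \<and> tau' = rho + {#(d1 + d2, m)#})"

definition elem_forget :: "(nat \<times> nat) multiset \<Rightarrow> (nat \<times> nat) multiset \<Rightarrow> bool" where
  "elem_forget tau tau' \<longleftrightarrow> (\<exists>d1 m1 a rho. 0 < a \<and> a < m1 \<and>
      tau = rho + {#(d1, m1)#} \<and> tau' = rho + {#(d1, m1 - a), (d1, a)#})"

definition type_le :: "(nat \<times> nat) multiset \<Rightarrow> (nat \<times> nat) multiset \<Rightarrow> bool" where
  "type_le tau lam \<longleftrightarrow> (\<lambda>x y. elem_merge x y \<or> elem_forget x y)\<^sup>*\<^sup>* tau lam"

end

theory Submission
  imports Defs "HOL-Combinatorics.List_Permutation"
begin

text \<open>
  An arrangement \<open>A\<close> of \<open>\<tau>\<close> into \<open>\<lambda>\<close> factors the passage from \<open>\<tau>\<close> to \<open>\<lambda>\<close> through the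
  type \<open>\<mu>\<close> containing \<open>A\<^sub>i\<^sub>j\<close> copies of \<open>(b\<^sub>i, n\<^sub>j)\<close>: the row equation
  \<open>\<Sum>\<^sub>j A\<^sub>i\<^sub>j n\<^sub>j = m\<^sub>i\<close> says that \<open>(b\<^sub>i, m\<^sub>i)\<close> splits by forgets into these pairs, and the
  column equation \<open>\<Sum>\<^sub>i A\<^sub>i\<^sub>j b\<^sub>i = c\<^sub>j\<close> says that the pairs of column \<open>j\<close> merge into
  \<open>(c\<^sub>j, n\<^sub>j)\<close>. Conversely, every elementary merge or forget is realised by an arrangement,
  arrangements combine block-diagonally, and the matrix product of arrangements is an
  arrangement; so \<open>\<tau> \<le> \<lambda>\<close> implies that an arrangement exists.
\<close>

lemma sum_lessThan_add:
  "(\<Sum>j < (a::nat) + b. f j) = (\<Sum>j < a. f j) + (\<Sum>j < b. f (a + j) :: 'a :: comm_monoid_add)"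
  by (induction b) (simp_all add: add.assoc)

lemma mset_eq_sum_nth: "mset xs = (\<Sum>i < length xs. {#xs ! i#})"
  by (induction xs) (simp_all only: length_Cons sum.lessThan_Suc_shift, simp_all)

lemma image_mset_sum: "image_mset f (\<Sum>i\<in>I. M i) = (\<Sum>i\<in>I. image_mset f (M i))"
  by (induction I rule: infinite_finite_induct) auto

lemma sum_mset_sum: "sum_mset (\<Sum>i\<in>I. M i) = (\<Sum>i\<in>I. sum_mset (M i))"
  by (induction I rule: infinite_finite_induct) auto

lemma arrangements_listD:
  assumes "A \<in> arrangements_list ts ls"
  shows "\<And>i j. length ts \<le> i \<or> length ls \<le> j \<Longrightarrow> A i j = 0"
    and "\<And>i. i < length ts \<Longrightarrow> (\<Sum>j < length ls. A i j * snd (ls ! j)) = snd (ts ! i)"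
    and "\<And>j. j < length ls \<Longrightarrow> (\<Sum>i < length ts. A i j * fst (ts ! i)) = fst (ls ! j)"
  using assms unfolding arrangements_list_def by auto

lemma arrangements_list_mult:
  assumes A: "A \<in> arrangements_list ts ms" and B: "B \<in> arrangements_list ms ls"
  shows "(\<lambda>i j. \<Sum>k < length ms. A i k * B k j) \<in> arrangements_list ts ls"
  unfolding arrangements_list_def
proof (intro CollectI conjI allI impI)
  fix i j assume "length ts \<le> i \<or> length ls \<le> j"
  then show "(\<Sum>k < length ms. A i k * B k j) = 0"
    using arrangements_listD(1)[OF A] arrangements_listD(1)[OF B] by auto
next
  fix i assume i: "i < length ts"
  have "(\<Sum>j < length ls. (\<Sum>k < length ms. A i k * B k j) * snd (ls ! j))
      = (\<Sum>k < length ms. A i k * (\<Sum>j < length ls. B k j * snd (ls ! j)))"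
    by (simp add: sum_distrib_left sum_distrib_right mult.assoc sum.swap[of _ "{..<length ls}"])
  also have "\<dots> = (\<Sum>k < length ms. A i k * snd (ms ! k))"
    using arrangements_listD(2)[OF B] by simp
  also have "\<dots> = snd (ts ! i)"
    using arrangements_listD(2)[OF A i] .
  finally show "(\<Sum>j < length ls. (\<Sum>k < length ms. A i k * B k j) * snd (ls ! j)) = snd (ts ! i)" .
next
  fix j assume j: "j < length ls"
  have "(\<Sum>i < length ts. (\<Sum>k < length ms. A i k * B k j) * fst (ts ! i))
      = (\<Sum>k < length ms. B k j * (\<Sum>i < length ts. A i k * fst (ts ! i)))"
    by (simp add: sum_distrib_left sum_distrib_right mult.assoc mult.left_commute
        sum.swap[of _ "{..<length ts}"])
  also have "\<dots> = (\<Sum>k < length ms. B k j * fst (ms ! k))"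
    using arrangements_listD(3)[OF A] by simp
  also have "\<dots> = fst (ls ! j)"
    using arrangements_listD(3)[OF B j] by (simp add: mult.commute)
  finally show "(\<Sum>i < length ts. (\<Sum>k < length ms. A i k * B k j) * fst (ts ! i)) = fst (ls ! j)" .
qed

lemma arrangements_list_reorder:
  assumes A: "A \<in> arrangements_list ts ls" and "mset ts' = mset ts" "mset ls' = mset ls"
  shows "arrangements_list ts' ls' \<noteq> {}"
proof -
  obtain f where f: "bij_betw f {..<length ts'} {..<length ts}"
    "\<forall>i < length ts'. ts' ! i = ts ! f i"
    using permutation_Ex_bij[OF assms(2)] by blast
  obtain g where g: "bij_betw g {..<length ls'} {..<length ls}"
    "\<forall>j < length ls'. ls' ! j = ls ! g j"
    using permutation_Ex_bij[OF assms(3)] by blast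
  have f_less: "f i < length ts" if "i < length ts'" for i
    using f(1) that unfolding bij_betw_def by auto
  have g_less: "g j < length ls" if "j < length ls'" for j
    using g(1) that unfolding bij_betw_def by auto
  let ?A = "\<lambda>i j. if i < length ts' \<and> j < length ls' then A (f i) (g j) else 0"
  have "?A \<in> arrangements_list ts' ls'" unfolding arrangements_list_def
  proof (intro CollectI conjI allI impI)
    fix i j assume "length ts' \<le> i \<or> length ls' \<le> j"
    then show "?A i j = 0" by auto
  next
    fix i assume i: "i < length ts'"
    have "(\<Sum>j < length ls'. ?A i j * snd (ls' ! j))
        = (\<Sum>j < length ls'. A (f i) (g j) * snd (ls ! g j))"
      using i g(2) by (intro sum.cong) auto
    also have "\<dots> = (\<Sum>k < length ls. A (f i) k * snd (ls ! k))"
      using sum.reindex_bij_betw[OF g(1)] .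
    also have "\<dots> = snd (ts' ! i)"
      using arrangements_listD(2)[OF A f_less[OF i]] f(2) i by simp
    finally show "(\<Sum>j < length ls'. ?A i j * snd (ls' ! j)) = snd (ts' ! i)" .
  next
    fix j assume j: "j < length ls'"
    have "(\<Sum>i < length ts'. ?A i j * fst (ts' ! i))
        = (\<Sum>i < length ts'. A (f i) (g j) * fst (ts ! f i))"
      using j f(2) by (intro sum.cong) auto
    also have "\<dots> = (\<Sum>k < length ts. A k (g j) * fst (ts ! k))"
      using sum.reindex_bij_betw[OF f(1)] .
    also have "\<dots> = fst (ls' ! j)"
      using arrangements_listD(3)[OF A g_less[OF j]] g(2) j by simp
    finally show "(\<Sum>i < length ts'. ?A i j * fst (ts' ! i)) = fst (ls' ! j)" .
  qed
  then show ?thesis by blast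
qed

lemma arrangements_list_append:
  assumes A1: "A1 \<in> arrangements_list ts1 ls1" and A2: "A2 \<in> arrangements_list ts2 ls2"
  shows "arrangements_list (ts1 @ ts2) (ls1 @ ls2) \<noteq> {}"
proof -
  define r s where "r = length ts1" "s = length ls1"
  let ?A = "\<lambda>i j. if i < r then (if j < s then A1 i j else 0)
                  else (if j < s then 0 else A2 (i - r) (j - s))"
  have "?A \<in> arrangements_list (ts1 @ ts2) (ls1 @ ls2)" unfolding arrangements_list_def
  proof (intro CollectI conjI allI impI)
    fix i j assume "length (ts1 @ ts2) \<le> i \<or> length (ls1 @ ls2) \<le> j"
    then have outside: "r + length ts2 \<le> i \<or> s + length ls2 \<le> j"
      by (simp add: r_s_def)
    show "?A i j = 0"
    proof (cases "i < r \<or> j < s")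
      case True
      with outside show ?thesis by auto
    next
      case False
      with outside have "length ts2 \<le> i - r \<or> length ls2 \<le> j - s" by linarith
      with False show ?thesis using arrangements_listD(1)[OF A2] by simp
    qed
  next
    fix i assume i: "i < length (ts1 @ ts2)"
    then show "(\<Sum>j < length (ls1 @ ls2). ?A i j * snd ((ls1 @ ls2) ! j)) = snd ((ts1 @ ts2) ! i)"
      using arrangements_listD(2)[OF A1, of i] arrangements_listD(2)[OF A2, of "i - r"]
      by (cases "i < r") (simp_all add: r_s_def sum_lessThan_add nth_append)
  next
    fix j assume j: "j < length (ls1 @ ls2)"
    then show "(\<Sum>i < length (ts1 @ ts2). ?A i j * fst ((ts1 @ ts2) ! i)) = fst ((ls1 @ ls2) ! j)"
      using arrangements_listD(3)[OF A1, of j] arrangements_listD(3)[OF A2, of "j - s"]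
      by (cases "j < s") (simp_all add: r_s_def sum_lessThan_add nth_append)
  qed
  then show ?thesis by blast
qed

lemma arrangements_list_identity:
  "(\<lambda>i j. if i = j \<and> i < length ts then 1 else 0) \<in> arrangements_list ts ts"
proof -
  have [simp]: "(if P then 1 else 0) * x = (if P then x else 0)" for P and x :: nat
    by simp
  show ?thesis unfolding arrangements_list_def
    by (auto simp only: sum.delta sum.delta' finite_lessThan lessThan_iff) auto
qed

lemma arrangements_list_merge_pair: "arrangements_list [(d1, m), (d2, m)] [(d1 + d2, m)] \<noteq> {}"
proof -
  have "(\<lambda>i j. if j = 0 \<and> i < 2 then 1 else 0) \<in> arrangements_list [(d1, m), (d2, m)] [(d1 + d2, m)]"
    unfolding arrangements_list_def by (auto simp: numeral_2_eq_2 lessThan_Suc less_Suc_eq)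
  then show ?thesis by blast
qed

lemma arrangements_list_forget_pair:
  assumes "a < m" shows "arrangements_list [(d, m)] [(d, m - a), (d, a)] \<noteq> {}"
proof -
  have "(\<lambda>i j. if i = 0 \<and> j < 2 then 1 else 0) \<in> arrangements_list [(d, m)] [(d, m - a), (d, a)]"
    using assms unfolding arrangements_list_def by (auto simp: numeral_2_eq_2 lessThan_Suc less_Suc_eq)
  then show ?thesis by blast
qed

lemma finite_arrangements_list:
  assumes pos: "\<forall>p \<in> set ls. snd p > 0"
  shows "finite (arrangements_list ts ls)"
proof -
  define r s M where "r = length ts" "s = length ls" "M = (\<Sum>i < length ts. snd (ts ! i))"
  let ?extend = "\<lambda>g i j. if i < r \<and> j < s then g (i, j) else (0::nat)"
  have "arrangements_list ts ls \<subseteq> ?extend ` PiE ({..<r} \<times> {..<s}) (\<lambda>_. {..M})"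
  proof
    fix A assume A: "A \<in> arrangements_list ts ls"
    have bound: "A i j \<le> M" if "i < r" "j < s" for i j
    proof -
      have "snd (ls ! j) > 0" using pos nth_mem that unfolding r_s_M_def by blast
      then have "A i j \<le> A i j * snd (ls ! j)" by simp
      also have "\<dots> \<le> (\<Sum>j < s. A i j * snd (ls ! j))"
        by (rule member_le_sum) (use that in auto)
      also have "\<dots> = snd (ts ! i)" using arrangements_listD(2)[OF A] that r_s_M_def by simp
      also have "\<dots> \<le> M" unfolding r_s_M_def
        by (rule member_le_sum[where f = "\<lambda>i. snd (ts ! i)"]) (use that r_s_M_def in auto)
      finally show ?thesis .
    qed
    let ?g = "restrict (\<lambda>(i, j). A i j) ({..<r} \<times> {..<s})"
    have "A = ?extend ?g"
      using arrangements_listD(1)[OF A] unfolding r_s_M_def by fastforce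
    moreover have "?g \<in> PiE ({..<r} \<times> {..<s}) (\<lambda>_. {..M})" using bound by auto
    ultimately show "A \<in> ?extend ` PiE ({..<r} \<times> {..<s}) (\<lambda>_. {..M})" by blast
  qed
  then show ?thesis by (rule finite_subset) (intro finite_imageI finite_PiE; simp)
qed

definition arrangeable :: "(nat \<times> nat) multiset \<Rightarrow> (nat \<times> nat) multiset \<Rightarrow> bool" where
  "arrangeable tau lam \<longleftrightarrow>
     (\<exists>ts ls. mset ts = tau \<and> mset ls = lam \<and> arrangements_list ts ls \<noteq> {})"

lemma arrangeable_iff_arrangements: "arrangeable tau lam \<longleftrightarrow> arrangements tau lam \<noteq> {}"
proof
  assume "arrangeable tau lam"
  then obtain ts ls A where "mset ts = tau" "mset ls = lam" "A \<in> arrangements_list ts ls"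
    unfolding arrangeable_def by blast
  then show "arrangements tau lam \<noteq> {}"
    unfolding arrangements_def by (intro arrangements_list_reorder) auto
next
  assume "arrangements tau lam \<noteq> {}"
  then show "arrangeable tau lam"
    unfolding arrangeable_def arrangements_def by (metis mset_sorted_list_of_multiset)
qed

lemma arrangeable_refl: "arrangeable tau tau"
  unfolding arrangeable_def using ex_mset arrangements_list_identity by blast

lemma arrangeable_trans:
  assumes "arrangeable x y" "arrangeable y z" shows "arrangeable x z"
proof -
  obtain ts ms A where ts: "mset ts = x" and ms: "mset ms = y" and A: "A \<in> arrangements_list ts ms"
    using assms(1) unfolding arrangeable_def by blast
  obtain ms' ls B where ms': "mset ms' = y" and ls: "mset ls = z" and B: "B \<in> arrangements_list ms' ls"
    using assms(2) unfolding arrangeable_def by blast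
  obtain B' where "B' \<in> arrangements_list ms ls"
    using arrangements_list_reorder[OF B, of ms ls] ms ms' by auto
  with A ts ls show ?thesis
    unfolding arrangeable_def by (blast intro: arrangements_list_mult)
qed

lemma arrangeable_add:
  assumes "arrangeable x y" "arrangeable x' y'" shows "arrangeable (x + x') (y + y')"
proof -
  obtain ts ls A where "mset ts = x" "mset ls = y" "A \<in> arrangements_list ts ls"
    using assms(1) unfolding arrangeable_def by blast
  moreover obtain ts' ls' A' where "mset ts' = x'" "mset ls' = y'" "A' \<in> arrangements_list ts' ls'"
    using assms(2) unfolding arrangeable_def by blast
  ultimately show ?thesis unfolding arrangeable_def
    by (intro exI[of _ "ts @ ts'"] exI[of _ "ls @ ls'"]) (auto dest: arrangements_list_append)
qed

lemma arrangeable_if_elem_merge: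
  assumes "elem_merge x y" shows "arrangeable x y"
proof -
  obtain d1 d2 m rho where xy: "x = rho + {#(d1, m), (d2, m)#}" "y = rho + {#(d1 + d2, m)#}"
    using assms unfolding elem_merge_def by blast
  have "arrangeable {#(d1, m), (d2, m)#} {#(d1 + d2, m)#}"
    unfolding arrangeable_def using arrangements_list_merge_pair
    by (intro exI[of _ "[(d1, m), (d2, m)]"] exI[of _ "[(d1 + d2, m)]"]) simp
  then show ?thesis unfolding xy by (rule arrangeable_add[OF arrangeable_refl])
qed

lemma arrangeable_if_elem_forget:
  assumes "elem_forget x y" shows "arrangeable x y"
proof -
  obtain d m a rho where "a < m" and xy: "x = rho + {#(d, m)#}" "y = rho + {#(d, m - a), (d, a)#}"
    using assms unfolding elem_forget_def by blast
  then have "arrangeable {#(d, m)#} {#(d, m - a), (d, a)#}"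
    unfolding arrangeable_def using arrangements_list_forget_pair
    by (intro exI[of _ "[(d, m)]"] exI[of _ "[(d, m - a), (d, a)]"]) simp
  then show ?thesis unfolding xy by (rule arrangeable_add[OF arrangeable_refl])
qed

lemma arrangeable_if_type_le: "type_le x y \<Longrightarrow> arrangeable x y"
  unfolding type_le_def
  by (induction rule: rtranclp_induct)
    (auto intro: arrangeable_refl arrangeable_trans arrangeable_if_elem_merge
      arrangeable_if_elem_forget)

lemma rtranclp_add_right:
  fixes r :: "'a :: plus \<Rightarrow> 'a \<Rightarrow> bool"
  assumes "\<And>x y. r x y \<Longrightarrow> r (x + z) (y + z)" and "r\<^sup>*\<^sup>* x y"
  shows "r\<^sup>*\<^sup>* (x + z) (y + z)"
  using assms(2) by induction (auto intro: rtranclp.rtrancl_into_rtrancl assms(1))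

lemma rtranclp_sum:
  fixes r :: "'a :: comm_monoid_add \<Rightarrow> 'a \<Rightarrow> bool"
  assumes add: "\<And>x y z. r x y \<Longrightarrow> r (x + z) (y + z)"
    and "finite I" and "\<forall>i \<in> I. r\<^sup>*\<^sup>* (X i) (Y i)"
  shows "r\<^sup>*\<^sup>* (\<Sum>i\<in>I. X i) (\<Sum>i\<in>I. Y i)"
  using assms(2,3)
proof (induction I rule: finite_induct)
  case (insert i I)
  have "r\<^sup>*\<^sup>* (X i + sum X I) (Y i + sum X I)"
    using insert.prems by (intro rtranclp_add_right add) auto
  moreover have "r\<^sup>*\<^sup>* (sum X I + Y i) (sum Y I + Y i)"
    using insert by (intro rtranclp_add_right add) auto
  ultimately show ?case using insert.hyps by (simp add: add.commute)
qed simp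

lemma elem_forget_add_right: "elem_forget x y \<Longrightarrow> elem_forget (x + z) (y + z)"
  unfolding elem_forget_def by (fastforce intro: exI[of _ "_ + z"])

lemma elem_merge_add_right: "elem_merge x y \<Longrightarrow> elem_merge (x + z) (y + z)"
  unfolding elem_merge_def by (fastforce intro: exI[of _ "_ + z"])

lemma elem_forget_split:
  assumes "\<forall>n \<in># N. n > 0" and "N \<noteq> {#}"
  shows "elem_forget\<^sup>*\<^sup>* {#(b, sum_mset N)#} (image_mset (Pair b) N)"
  using assms
proof (induction N)
  case (add n N)
  show ?case
  proof (cases "N = {#}")
    case False
    then obtain k where k: "k \<in># N" by blast
    then have "sum_mset N > 0"
      using sum_mset.remove[OF k] add.prems by auto
    then have "elem_forget {#(b, n + sum_mset N)#} ({#(b, sum_mset N)#} + {#(b, n)#})"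
      using add.prems unfolding elem_forget_def
      by (intro exI[of _ b] exI[of _ "n + sum_mset N"] exI[of _ n] exI[of _ "{#}"]) simp
    moreover have "elem_forget\<^sup>*\<^sup>* ({#(b, sum_mset N)#} + {#(b, n)#}) (image_mset (Pair b) N + {#(b, n)#})"
      using add False by (intro rtranclp_add_right elem_forget_add_right) auto
    ultimately show ?thesis by (simp add: converse_rtranclp_into_rtranclp)
  qed simp
qed simp

lemma elem_merge_join:
  assumes "K \<noteq> {#}"
  shows "elem_merge\<^sup>*\<^sup>* (image_mset (\<lambda>b. (b, n)) K) {#(sum_mset K, n)#}"
  using assms
proof (induction K)
  case (add b K)
  show ?case
  proof (cases "K = {#}")
    case False
    have "elem_merge\<^sup>*\<^sup>* (image_mset (\<lambda>b. (b, n)) K + {#(b, n)#}) ({#(sum_mset K, n)#} + {#(b, n)#})"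
      using add.IH[OF False] by (intro rtranclp_add_right elem_merge_add_right)
    moreover have "elem_merge ({#(sum_mset K, n)#} + {#(b, n)#}) {#(b + sum_mset K, n)#}"
      unfolding elem_merge_def
      by (intro exI[of _ b] exI[of _ "sum_mset K"] exI[of _ n] exI[of _ "{#}"]) simp
    ultimately show ?thesis by (simp add: add.commute)
  qed simp
qed simp

lemma elem_forget_rows:
  fixes A :: "nat \<Rightarrow> nat \<Rightarrow> nat"
  assumes rows: "\<And>i. i < r \<Longrightarrow> (\<Sum>j < s. A i j * n j) = m i"
    and m_pos: "\<And>i. i < r \<Longrightarrow> m i > 0" and n_pos: "\<And>j. j < s \<Longrightarrow> n j > 0"
  shows "elem_forget\<^sup>*\<^sup>* (\<Sum>i < r. {#(b i, m i)#})
           (\<Sum>i < r. \<Sum>j < s. replicate_mset (A i j) (b i, n j))"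
proof (intro rtranclp_sum elem_forget_add_right finite_lessThan ballI)
  fix i assume "i \<in> {..<r}"
  then have i: "i < r" by simp
  define N where "N = (\<Sum>j < s. replicate_mset (A i j) (n j))"
  have "sum_mset N = m i"
    using rows[OF i] unfolding N_def sum_mset_sum by simp
  moreover have "N \<noteq> {#}"
    using m_pos[OF i] \<open>sum_mset N = m i\<close> by auto
  moreover have "\<forall>x \<in># N. x > 0"
    using n_pos unfolding N_def by (auto simp: set_mset_sum)
  moreover have "image_mset (Pair (b i)) N = (\<Sum>j < s. replicate_mset (A i j) (b i, n j))"
    unfolding N_def image_mset_sum by simp
  ultimately show "elem_forget\<^sup>*\<^sup>* {#(b i, m i)#} (\<Sum>j < s. replicate_mset (A i j) (b i, n j))"
    using elem_forget_split[of N "b i"] by simp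
qed

lemma elem_merge_columns:
  fixes A :: "nat \<Rightarrow> nat \<Rightarrow> nat"
  assumes columns: "\<And>j. j < s \<Longrightarrow> (\<Sum>i < r. A i j * b i) = c j"
    and c_pos: "\<And>j. j < s \<Longrightarrow> c j > 0"
  shows "elem_merge\<^sup>*\<^sup>* (\<Sum>i < r. \<Sum>j < s. replicate_mset (A i j) (b i, n j))
           (\<Sum>j < s. {#(c j, n j)#})"
proof -
  have "elem_merge\<^sup>*\<^sup>* (\<Sum>j < s. \<Sum>i < r. replicate_mset (A i j) (b i, n j))
           (\<Sum>j < s. {#(c j, n j)#})"
  proof (intro rtranclp_sum elem_merge_add_right finite_lessThan ballI)
    fix j assume "j \<in> {..<s}"
    then have j: "j < s" by simp
    define K where "K = (\<Sum>i < r. replicate_mset (A i j) (b i))"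
    have "sum_mset K = c j"
      using columns[OF j] unfolding K_def sum_mset_sum by simp
    moreover have "K \<noteq> {#}"
      using c_pos[OF j] \<open>sum_mset K = c j\<close> by auto
    moreover have "image_mset (\<lambda>x. (x, n j)) K = (\<Sum>i < r. replicate_mset (A i j) (b i, n j))"
      unfolding K_def image_mset_sum by simp
    ultimately show "elem_merge\<^sup>*\<^sup>* (\<Sum>i < r. replicate_mset (A i j) (b i, n j)) {#(c j, n j)#}"
      using elem_merge_join[of K "n j"] by simp
  qed
  then show ?thesis by (subst sum.swap)
qed

lemma forget_then_merge_if_arrangement:
  assumes A: "A \<in> arrangements_list ts ls"
    and ts_pos: "\<forall>p \<in> set ts. fst p > 0 \<and> snd p > 0"
    and ls_pos: "\<forall>p \<in> set ls. fst p > 0 \<and> snd p > 0"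
  shows "\<exists>mu. elem_forget\<^sup>*\<^sup>* (mset ts) mu \<and> elem_merge\<^sup>*\<^sup>* mu (mset ls)"
proof -
  have "elem_forget\<^sup>*\<^sup>* (\<Sum>i < length ts. {#(fst (ts ! i), snd (ts ! i))#})
          (\<Sum>i < length ts. \<Sum>j < length ls. replicate_mset (A i j) (fst (ts ! i), snd (ls ! j)))"
    using arrangements_listD(2)[OF A] ts_pos ls_pos by (intro elem_forget_rows) auto
  moreover have "elem_merge\<^sup>*\<^sup>*
          (\<Sum>i < length ts. \<Sum>j < length ls. replicate_mset (A i j) (fst (ts ! i), snd (ls ! j)))
          (\<Sum>j < length ls. {#(fst (ls ! j), snd (ls ! j))#})"
    using arrangements_listD(3)[OF A] ls_pos by (intro elem_merge_columns) auto
  ultimately show ?thesis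
    unfolding mset_eq_sum_nth[of ts] mset_eq_sum_nth[of ls] by auto
qed

lemma type_le_if_forget_then_merge:
  assumes "elem_forget\<^sup>*\<^sup>* x mu" "elem_merge\<^sup>*\<^sup>* mu y" shows "type_le x y"
proof -
  have "elem_forget\<^sup>*\<^sup>* \<le> (\<lambda>x y. elem_merge x y \<or> elem_forget x y)\<^sup>*\<^sup>*"
       "elem_merge\<^sup>*\<^sup>* \<le> (\<lambda>x y. elem_merge x y \<or> elem_forget x y)\<^sup>*\<^sup>*"
    by (intro rtranclp_mono; auto)+
  with assms show ?thesis
    unfolding type_le_def by (meson predicate2D rtranclp_trans)
qed

theorem proposition4:
  fixes d :: nat and tau lam :: "(nat \<times> nat) multiset"
  assumes "is_type d tau" and "is_type d lam"
  shows "(arrangements tau lam \<noteq> {} \<longleftrightarrow>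
            (\<exists>mu. elem_forget\<^sup>*\<^sup>* tau mu \<and> elem_merge\<^sup>*\<^sup>* mu lam))
       \<and> (arr_count tau lam > 0 \<longleftrightarrow> type_le tau lam)"
proof -
  have tau_pos: "\<forall>p \<in> set (sorted_list_of_multiset tau). fst p > 0 \<and> snd p > 0"
    and lam_pos: "\<forall>p \<in> set (sorted_list_of_multiset lam). fst p > 0 \<and> snd p > 0"
    using assms unfolding is_type_def by simp_all
  have forget_merge: "\<exists>mu. elem_forget\<^sup>*\<^sup>* tau mu \<and> elem_merge\<^sup>*\<^sup>* mu lam"
    if "arrangements tau lam \<noteq> {}"
    using that forget_then_merge_if_arrangement[OF _ tau_pos lam_pos]
    unfolding arrangements_def by fastforce
  have "arr_count tau lam > 0 \<longleftrightarrow> arrangements tau lam \<noteq> {}"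
    unfolding arr_count_def arrangements_def
    using lam_pos by (simp add: card_gt_0_iff finite_arrangements_list)
  then show ?thesis
    using forget_merge type_le_if_forget_then_merge arrangeable_if_type_le
      arrangeable_iff_arrangements by blast
qed

end
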